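(* Let $A$ be a quaternion or octonion division algebra over an arbitrary field $F$, and $f(x)\in A[x]$ of even degree $2n$. Suppose $f(x)$ has $n$ spherical roots from $n$ distinct quadratic-equivalence classes. Then $f(x)=c\,g(x)$ for some $c\in A$ and $g(x)\in F[x]$.
   Context: For an $F$-algebra $B$ with involution and $\gamma\in F^\times$, the Cayley--Dickson double $B\{\gamma\}$ is $B\times B$ with componentwise linear operations, product $(a,b)(c,d)=(ac+\gamma\bar d b,\ da+b\bar c)$ and involution $\overline{(a,b)}=(\bar a,-b)$. Cayley--Dickson algebras over $F$: $A_1=F[\ell_1:\ell_1^2=\ell_1+\mu]$ with $\mu\in F$, $4\mu+1\neq0$, involution $\overline{\alpha+\beta\ell_1}=(\alpha+\beta)-\beta\ell_1$, and $A_{k+1}=A_k\{\gamma_k\}$, $\gamma_k\in F^\times$. Quaternion algebras are the $A_2$, octonion algebras the $A_3$; division means the norm is anisotropic. Trace $\mathrm{tr}(\lambda)=\lambda+\bar\lambda\in F$, norm $\mathrm{n}(\lambda)=\bar\lambda\lambda\in F$, characteristic polynomial $p_\lambda(x)=x^2-\mathrm{tr}(\lambda)x+\mathrm{n}(\lambda)$. $A[x]=A\otimes_F F[x]$ with central $x$; $f(x)=a_mx^m+\dots+a_0$; substitution $f(r)=\sum_k a_k(r^k)$; $c\,g(x)$ means multiplying each coefficient of $g$ by $c$ on the left. A root $\lambda\in A\setminus F$ of $f$ is spherical if every $r\in A$ with $p_\lambda(r)=0$ is a root of $f$. Elements are quadratically-equivalent if they have the same trace and norm. *)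

theory Defs
  imports "HOL-Computational_Algebra.Polynomial"
begin

(* Cayley--Dickson algebras over a field 'f, elements represented as coefficient lists.
   Level A_1 = F[l : l^2 = l + mu]: element [a0, a1] stands for a0 + a1*l.
   Level A_{k+1} = A_k{gamma_k}: element of A_{k+1} is the concatenation a @ b of the
   pair (a,b) of elements of A_k.
   The parameter list gs lists the doubling constants OUTERMOST FIRST:
   gs = [gamma_k, ..., gamma_1] describes A_{k+1} = (...(A_1{gamma_1})...){gamma_k}. *)

definition vadd :: "'f::field list \<Rightarrow> 'f list \<Rightarrow> 'f list" where
  "vadd x y = map2 (+) x y"

definition vsub :: "'f::field list \<Rightarrow> 'f list \<Rightarrow> 'f list" where
  "vsub x y = map2 (-) x y"

fun cd_conj :: "'f::field list \<Rightarrow> 'f list \<Rightarrow> 'f list" where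
  "cd_conj [] x = [x!0 + x!1, - (x!1)]"
| "cd_conj (g#gs) x =
     (let h = length x div 2 in cd_conj gs (take h x) @ map uminus (drop h x))"

fun cd_mul :: "'f::field \<Rightarrow> 'f list \<Rightarrow> 'f list \<Rightarrow> 'f list \<Rightarrow> 'f list" where
  "cd_mul mu [] x y = [x!0 * y!0 + mu * (x!1 * y!1), x!0 * y!1 + x!1 * y!0 + x!1 * y!1]"
| "cd_mul mu (g#gs) x y =
     (let h = length x div 2; a = take h x; b = drop h x; c = take h y; d = drop h y in
       vadd (cd_mul mu gs a c) (map ((*) g) (cd_mul mu gs (cd_conj gs d) b))
       @ vadd (cd_mul mu gs d a) (cd_mul mu gs b (cd_conj gs c)))"

definition cd_dim :: "'f list \<Rightarrow> nat" where
  "cd_dim gs = 2 ^ Suc (length gs)"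

definition cd_carrier :: "'f list \<Rightarrow> 'f list set" where
  "cd_carrier gs = {x. length x = cd_dim gs}"

definition cd_scal :: "'f list \<Rightarrow> 'f::field \<Rightarrow> 'f list" where
  "cd_scal gs a = a # replicate (cd_dim gs - 1) 0"

definition cd_zero :: "'f::field list \<Rightarrow> 'f list" where
  "cd_zero gs = cd_scal gs 0"

definition cd_in_F :: "'f::field list \<Rightarrow> 'f list \<Rightarrow> bool" where
  "cd_in_F gs x = (\<exists>a. x = cd_scal gs a)"

fun cd_pow :: "'f::field \<Rightarrow> 'f list \<Rightarrow> 'f list \<Rightarrow> nat \<Rightarrow> 'f list" where
  "cd_pow mu gs r 0 = cd_scal gs 1"
| "cd_pow mu gs r (Suc k) = cd_mul mu gs r (cd_pow mu gs r k)"

definition cd_tr :: "'f::field list \<Rightarrow> 'f list \<Rightarrow> 'f list" where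
  "cd_tr gs x = vadd x (cd_conj gs x)"

definition cd_norm :: "'f::field \<Rightarrow> 'f list \<Rightarrow> 'f list \<Rightarrow> 'f list" where
  "cd_norm mu gs x = cd_mul mu gs (cd_conj gs x) x"

definition cd_division :: "'f::field \<Rightarrow> 'f list \<Rightarrow> bool" where
  "cd_division mu gs = (\<forall>x\<in>cd_carrier gs. cd_norm mu gs x = cd_zero gs \<longrightarrow> x = cd_zero gs)"

definition cd_params_ok :: "'f::field \<Rightarrow> 'f list \<Rightarrow> bool" where
  "cd_params_ok mu gs = (4 * mu + 1 \<noteq> 0 \<and> (\<forall>g\<in>set gs. g \<noteq> 0))"

text \<open>Polynomials in A[x] as coefficient lists fs (fs!k is the coefficient of x^k).
  Substitution f(r) = sum_k a_k (r^k).\<close>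
definition cd_pcoeff :: "'f::field list \<Rightarrow> 'f list list \<Rightarrow> nat \<Rightarrow> 'f list" where
  "cd_pcoeff gs fs k = (if k < length fs then fs ! k else cd_zero gs)"

definition cd_eval :: "'f::field \<Rightarrow> 'f list \<Rightarrow> 'f list list \<Rightarrow> 'f list \<Rightarrow> 'f list" where
  "cd_eval mu gs fs r =
     foldr vadd (map (\<lambda>k. cd_mul mu gs (fs ! k) (cd_pow mu gs r k)) [0..<length fs]) (cd_zero gs)"

definition cd_charpoly_eval :: "'f::field \<Rightarrow> 'f list \<Rightarrow> 'f list \<Rightarrow> 'f list \<Rightarrow> 'f list" where
  "cd_charpoly_eval mu gs lam r =
     vadd (vsub (cd_pow mu gs r 2) (cd_mul mu gs (cd_tr gs lam) r)) (cd_norm mu gs lam)"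

definition cd_spherical_root :: "'f::field \<Rightarrow> 'f list \<Rightarrow> 'f list list \<Rightarrow> 'f list \<Rightarrow> bool" where
  "cd_spherical_root mu gs fs lam =
     (lam \<in> cd_carrier gs \<and> \<not> cd_in_F gs lam \<and> cd_eval mu gs fs lam = cd_zero gs \<and>
      (\<forall>r\<in>cd_carrier gs. cd_charpoly_eval mu gs lam r = cd_zero gs \<longrightarrow> cd_eval mu gs fs r = cd_zero gs))"

definition cd_quad_equiv :: "'f::field \<Rightarrow> 'f list \<Rightarrow> 'f list \<Rightarrow> 'f list \<Rightarrow> bool" where
  "cd_quad_equiv mu gs x y = (cd_tr gs x = cd_tr gs y \<and> cd_norm mu gs x = cd_norm mu gs y)"

end

theory Submission
  imports Defs "HOL-Computational_Algebra.Polynomial_Factorial"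
begin

(*
  Let lam be a spherical root of f with trace t and norm m. Every r with p_lam(r) = 0 satisfies
  r^2 = t r - m, hence r^k = a_k + b_k r, where a_k + b_k x is the remainder of x^k modulo
  p_lam(x) = x^2 - t x + m. So f(r) = A + B r with A = \<Sum> a_k f_k and B = \<Sum> b_k f_k not
  depending on r. The sphere p_lam(r) = 0 contains some r \<noteq> lam, and B (lam - r) = 0 forces
  B = 0 in the division algebra, and then A = 0. Read coordinatewise, this says that p_lam divides
  each coordinate polynomial h_j = \<Sum>_k (f_k)_j x^k of F[x]. The p_lam are irreducible over F,
  because p_lam(a) = n(lam - a) \<noteq> 0 for lam outside F, and pairwise distinct; so their product g,
  of degree 2n, divides every h_j, which has degree at most 2n. Thus h_j = (f_2n)_j g, i.e.
  f = f_2n g.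
*)

definition quad_poly :: "'a::comm_ring_1 \<Rightarrow> 'a \<Rightarrow> 'a poly" where
  "quad_poly t m = [:m, - t, 1:]"

lemma degree_quad_poly [simp]: "degree (quad_poly t m) = 2"
  and coeff_2_quad_poly [simp]: "coeff (quad_poly t m) 2 = 1"
  and quad_poly_nonzero [simp]: "quad_poly t m \<noteq> 0"
  and poly_quad_poly: "poly (quad_poly t m) a = a * a - t * a + m"
  by (auto simp: quad_poly_def algebra_simps numeral_2_eq_2)

lemma quad_poly_eq_iff [simp]: "quad_poly t m = quad_poly t' m' \<longleftrightarrow> t = t' \<and> m = m'"
  by (auto simp: quad_poly_def)

fun pow_rem :: "'a::comm_ring_1 \<Rightarrow> 'a \<Rightarrow> nat \<Rightarrow> 'a \<times> 'a" where
  "pow_rem t m 0 = (1, 0)"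
| "pow_rem t m (Suc k) = (- snd (pow_rem t m k) * m, fst (pow_rem t m k) + snd (pow_rem t m k) * t)"

lemma quad_poly_dvd_monom_minus_pow_rem:
  "quad_poly t m dvd monom 1 k - [:fst (pow_rem t m k), snd (pow_rem t m k):]"
proof (induction k)
  case 0
  then show ?case by (simp add: monom_0)
next
  case (Suc k)
  have eq: "monom 1 (Suc k) - [:fst (pow_rem t m (Suc k)), snd (pow_rem t m (Suc k)):]
      = [:0, 1:] * (monom 1 k - [:fst (pow_rem t m k), snd (pow_rem t m k):])
        + smult (snd (pow_rem t m k)) (quad_poly t m)"
    by (rule poly_eqI)
      (simp add: quad_poly_def coeff_monom_mult monom_Suc coeff_pCons algebra_simps split: nat.split)
  show ?case unfolding eq using Suc.IH by (intro dvd_add dvd_mult dvd_smult) simp_all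
qed

lemma quad_poly_dvd_sum_monom_minus_pow_rem:
  "quad_poly t m dvd (\<Sum>k<N. monom (c k) k)
     - [:\<Sum>k<N. fst (pow_rem t m k) * c k, \<Sum>k<N. snd (pow_rem t m k) * c k:]"
proof (induction N)
  case 0
  then show ?case by simp
next
  case (Suc N)
  have eq: "(\<Sum>k<Suc N. monom (c k) k)
      - [:\<Sum>k<Suc N. fst (pow_rem t m k) * c k, \<Sum>k<Suc N. snd (pow_rem t m k) * c k:]
    = ((\<Sum>k<N. monom (c k) k)
      - [:\<Sum>k<N. fst (pow_rem t m k) * c k, \<Sum>k<N. snd (pow_rem t m k) * c k:])
      + smult (c N) (monom 1 N - [:fst (pow_rem t m N), snd (pow_rem t m N):])"
    by (rule poly_eqI) (simp add: coeff_pCons algebra_simps split: nat.split)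
  show ?case unfolding eq
    using Suc.IH by (intro dvd_add dvd_smult quad_poly_dvd_monom_minus_pow_rem)
qed

lemma quad_poly_dvd_sum_monom:
  assumes "(\<Sum>k<N. fst (pow_rem t m k) * c k) = 0" and "(\<Sum>k<N. snd (pow_rem t m k) * c k) = 0"
  shows "quad_poly t m dvd (\<Sum>k<N. monom (c k) k)"
  using quad_poly_dvd_sum_monom_minus_pow_rem[where t=t and m=m and N=N and c=c] assms by simp

lemma poly_linear_root:
  fixes p :: "'a::field poly"
  assumes "degree p = 1"
  shows "poly p (- coeff p 0 / coeff p 1) = 0"
  using assms leading_coeff_0_iff[of p] by (simp add: poly_altdef)

lemma irreducible_quad_poly:
  fixes t m :: "'a::field"
  assumes no_root: "\<And>a. poly (quad_poly t m) a \<noteq> 0"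
  shows "irreducible (quad_poly t m)"
proof (rule irreducibleI)
  fix a b assume ab: "quad_poly t m = a * b"
  have no_linear_factor: "degree d \<noteq> 1" if "d dvd quad_poly t m" for d
    using poly_linear_root[of d] no_root that by (metis dvd_trans poly_eq_0_iff_dvd)
  have "a \<noteq> 0" "b \<noteq> 0" using ab by auto
  then have "degree a + degree b = 2" using ab by (metis degree_mult_eq degree_quad_poly)
  moreover have "degree a \<noteq> 1" "degree b \<noteq> 1"
    using no_linear_factor[of a] no_linear_factor[of b] ab by auto
  ultimately have "degree a = 0 \<or> degree b = 0" by linarith
  then show "a dvd 1 \<or> b dvd 1" using \<open>a \<noteq> 0\<close> \<open>b \<noteq> 0\<close> by (auto simp: is_unit_iff_degree)
qed (auto simp: is_unit_iff_degree)

lemma monic_dvd_irreducible_imp_eq: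
  fixes p q :: "'a::field poly"
  assumes "p dvd q" and "irreducible q" and "\<not> is_unit p"
    and "lead_coeff p = 1" and "lead_coeff q = 1"
  shows "p = q"
proof -
  obtain u where q: "q = p * u" using assms(1) by (elim dvdE)
  then have "is_unit u" using irreducibleD[OF assms(2) q] assms(3) by auto
  then obtain c where u: "u = [:c:]" by (elim is_unit_polyE)
  have "lead_coeff q = lead_coeff p * lead_coeff u" using q by (simp add: lead_coeff_mult)
  then have "u = 1" using u assms(4,5) by simp
  then show ?thesis using q by simp
qed

lemma prime_elem_dvd_prod_lessThanD:
  fixes n :: nat
  shows "prime_elem p \<Longrightarrow> p dvd (\<Prod>i<n. q i) \<Longrightarrow> \<exists>i<n. p dvd q i"
  by (induction n) (auto simp: prime_elem_dvd_mult_iff prime_elem_not_unit less_Suc_eq)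

lemma prod_dvd_if_distinct_monic_irreducible:
  fixes p :: "nat \<Rightarrow> 'a::field poly"
  assumes "\<And>i. i < n \<Longrightarrow> irreducible (p i)" and "\<And>i. i < n \<Longrightarrow> lead_coeff (p i) = 1"
    and "inj_on p {..<n}" and "\<And>i. i < n \<Longrightarrow> p i dvd h"
  shows "(\<Prod>i<n. p i) dvd h"
  using assms
proof (induction n)
  case 0
  then show ?case by simp
next
  case (Suc n)
  have prime: "prime_elem (p n)" by (simp add: Suc.prems(1) field_poly_irreducible_imp_prime)
  have "inj_on p {..<n}" using Suc.prems(3) by (rule inj_on_subset) auto
  then have "(\<Prod>i<n. p i) dvd h" using Suc by simp
  then obtain e where h: "h = (\<Prod>i<n. p i) * e" by (elim dvdE)
  have "\<not> p n dvd (\<Prod>i<n. p i)"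
  proof
    assume "p n dvd (\<Prod>i<n. p i)"
    then obtain i where "i < n" "p n dvd p i" using prime_elem_dvd_prod_lessThanD[OF prime] by blast
    then have "p n = p i"
      using Suc.prems(1,2) prime
      by (intro monic_dvd_irreducible_imp_eq) (auto simp: prime_elem_not_unit)
    then show False using \<open>i < n\<close> Suc.prems(3) by (auto dest: inj_onD)
  qed
  then have "p n dvd e" using Suc.prems(4)[of n] prime by (simp add: h prime_elem_dvd_mult_iff)
  then show ?case by (simp add: h mult_dvd_mono)
qed

lemma dvd_imp_eq_smult_if_degree_le:
  fixes h q :: "'a::field poly"
  assumes "q dvd h" and "degree h \<le> degree q" and "lead_coeff q = 1"
  shows "h = smult (coeff h (degree q)) q"
proof -
  obtain e where e: "h = q * e" using assms(1) by (elim dvdE)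
  have "q \<noteq> 0" using assms(3) by auto
  then have "degree e = 0" if "e \<noteq> 0" using e assms(2) that by (simp add: degree_mult_eq)
  then obtain c where "e = [:c:]" by (metis degree_0 degree_eq_zeroE)
  then show ?thesis using e assms(3) by simp
qed


definition vsmul :: "'f::field \<Rightarrow> 'f list \<Rightarrow> 'f list" where
  "vsmul c x = map ((*) c) x"

definition vsum :: "'f::field list \<Rightarrow> 'f list list \<Rightarrow> 'f list" where
  "vsum gs vs = foldr vadd vs (cd_zero gs)"

lemma vsum_Nil [simp]: "vsum gs [] = cd_zero gs"
  and vsum_Cons [simp]: "vsum gs (v # vs) = vadd v (vsum gs vs)"
  by (simp_all add: vsum_def)

lemma vadd_closed [simp]: "x \<in> cd_carrier gs \<Longrightarrow> y \<in> cd_carrier gs \<Longrightarrow> vadd x y \<in> cd_carrier gs"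
  and vsub_closed [simp]: "x \<in> cd_carrier gs \<Longrightarrow> y \<in> cd_carrier gs \<Longrightarrow> vsub x y \<in> cd_carrier gs"
  and vsmul_closed [simp]: "x \<in> cd_carrier gs \<Longrightarrow> vsmul c x \<in> cd_carrier gs"
  and cd_scal_closed [simp]: "cd_scal gs a \<in> cd_carrier gs"
  and cd_zero_closed [simp]: "cd_zero gs \<in> cd_carrier gs"
  by (simp_all add: cd_carrier_def vadd_def vsub_def vsmul_def cd_zero_def cd_scal_def cd_dim_def)

lemma vsum_closed [simp]: "\<forall>v\<in>set vs. v \<in> cd_carrier gs \<Longrightarrow> vsum gs vs \<in> cd_carrier gs"
  by (induction vs) simp_all

lemma nth_vadd:
    "x \<in> cd_carrier gs \<Longrightarrow> y \<in> cd_carrier gs \<Longrightarrow> j < cd_dim gs \<Longrightarrow> vadd x y ! j = x ! j + y ! j"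
  and nth_vsub:
    "x \<in> cd_carrier gs \<Longrightarrow> y \<in> cd_carrier gs \<Longrightarrow> j < cd_dim gs \<Longrightarrow> vsub x y ! j = x ! j - y ! j"
  and nth_vsmul: "x \<in> cd_carrier gs \<Longrightarrow> j < cd_dim gs \<Longrightarrow> vsmul c x ! j = c * x ! j"
  and nth_cd_scal [simp]: "j < cd_dim gs \<Longrightarrow> cd_scal gs a ! j = (if j = 0 then a else 0)"
  and nth_cd_zero [simp]: "j < cd_dim gs \<Longrightarrow> cd_zero gs ! j = 0"
  by (auto simp: cd_carrier_def vadd_def vsub_def vsmul_def cd_zero_def cd_scal_def nth_Cons'
      simp del: replicate.simps)

lemma nth_vsum:
  "\<forall>v\<in>set vs. v \<in> cd_carrier gs \<Longrightarrow> j < cd_dim gs \<Longrightarrow> vsum gs vs ! j = (\<Sum>v\<leftarrow>vs. v ! j)"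
  by (induction vs) (auto simp: nth_vadd)

definition cd_lincomb :: "'f::field list \<Rightarrow> (nat \<Rightarrow> 'f) \<Rightarrow> 'f list list \<Rightarrow> 'f list" where
  "cd_lincomb gs c fs = vsum gs (map (\<lambda>k. vsmul (c k) (fs ! k)) [0..<length fs])"

lemma cd_lincomb_closed [simp]: "\<forall>a\<in>set fs. a \<in> cd_carrier gs \<Longrightarrow> cd_lincomb gs c fs \<in> cd_carrier gs"
  by (auto simp: cd_lincomb_def)

lemma nth_cd_lincomb:
  "\<forall>a\<in>set fs. a \<in> cd_carrier gs \<Longrightarrow> j < cd_dim gs \<Longrightarrow>
    cd_lincomb gs c fs ! j = (\<Sum>k<length fs. c k * fs ! k ! j)"
  by (auto simp: cd_lincomb_def nth_vsum interv_sum_list_conv_sum_set_nat atLeast0LessThan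
      nth_vsmul[where gs = gs] intro!: sum.cong)

lemma vsmul_1 [simp]: "vsmul 1 x = x"
  by (induction x) (simp_all add: vsmul_def)

lemma cd_carrier_eqI:
  assumes "x \<in> cd_carrier gs" and "y \<in> cd_carrier gs" and "\<And>j. j < cd_dim gs \<Longrightarrow> x ! j = y ! j"
  shows "x = y"
  using assms by (intro nth_equalityI) (auto simp: cd_carrier_def)

lemma vsub_eq_zero_iff:
  "x \<in> cd_carrier gs \<Longrightarrow> y \<in> cd_carrier gs \<Longrightarrow> vsub x y = cd_zero gs \<longleftrightarrow> x = y"
  by (metis cd_carrier_eqI cd_zero_closed eq_iff_diff_eq_0 nth_cd_zero nth_vsub vsub_closed)

definition cd_coord_poly :: "'f::field list list \<Rightarrow> nat \<Rightarrow> 'f poly" where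
  "cd_coord_poly fs j = (\<Sum>k<length fs. monom (fs ! k ! j) k)"

lemma coeff_cd_coord_poly:
  "coeff (cd_coord_poly fs j) k = (if k < length fs then fs ! k ! j else 0)"
  by (simp add: cd_coord_poly_def coeff_sum)

lemma degree_cd_coord_poly_le: "degree (cd_coord_poly fs j) \<le> length fs - 1"
  by (rule degree_le) (auto simp: coeff_cd_coord_poly)

lemma cd_mul_quaternion:
  "cd_mul mu [g] [x0,x1,x2,x3] [y0,y1,y2,y3]
   = [-g*mu*x3*y3 + g*x2*y2 + g*x2*y3 + mu*x1*y1 + x0*y0,
      -g*x2*y3 + g*x3*y2 + x0*y1 + x1*y0 + x1*y1,
      mu*x1*y3 - mu*x3*y1 + x0*y2 + x2*y0 + x2*y1,
      x0*y3 + x1*y2 + x1*y3 - x2*y1 + x3*y0]"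
  by (simp add: vadd_def Let_def) (simp add: algebra_simps)

lemma cd_conj_quaternion: "cd_conj [g] [x0,x1,x2,x3] = [x0 + x1, - x1, - x2, - x3]"
  by (simp add: Let_def)

lemma cd_mul_octonion:
  "cd_mul mu [g2,g1] [x0,x1,x2,x3,x4,x5,x6,x7] [y0,y1,y2,y3,y4,y5,y6,y7]
   = [g1*g2*mu*x7*y7 - g1*g2*x6*y6 - g1*g2*x7*y6 - g1*mu*x3*y3 + g1*x2*y2 + g1*x2*y3 - g2*mu*x5*y5 + g2*x4*y4 + g2*x4*y5 + mu*x1*y1 + x0*y0,
      -g1*g2*x6*y7 + g1*g2*x7*y6 - g1*x2*y3 + g1*x3*y2 - g2*x4*y5 + g2*x5*y4 + x0*y1 + x1*y0 + x1*y1,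
      g2*mu*x5*y7 - g2*mu*x7*y5 - g2*x4*y6 - g2*x5*y6 + g2*x6*y4 + g2*x6*y5 + mu*x1*y3 - mu*x3*y1 + x0*y2 + x2*y0 + x2*y1,
      -g2*x4*y7 + g2*x5*y6 - g2*x6*y5 + g2*x7*y4 + x0*y3 + x1*y2 + x1*y3 - x2*y1 + x3*y0,
      -g1*mu*x3*y7 + g1*mu*x7*y3 + g1*x2*y6 + g1*x3*y6 - g1*x6*y2 - g1*x6*y3 + mu*x1*y5 - mu*x5*y1 + x0*y4 + x4*y0 + x4*y1,
      g1*x2*y7 - g1*x3*y6 + g1*x6*y3 - g1*x7*y2 + x0*y5 + x1*y4 + x1*y5 - x4*y1 + x5*y0,
      -mu*x1*y7 + mu*x3*y5 - mu*x5*y3 + mu*x7*y1 + x0*y6 + x1*y6 + x2*y4 - x4*y2 + x6*y0,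
      x0*y7 - x1*y6 + x2*y5 + x3*y4 + x3*y5 - x4*y3 - x5*y2 - x5*y3 + x6*y1 + x7*y0 + x7*y1]"
  by (simp add: vadd_def Let_def) (simp add: algebra_simps)

lemma cd_conj_octonion:
  "cd_conj [g2,g1] [x0,x1,x2,x3,x4,x5,x6,x7] = [x0 + x1, - x1, - x2, - x3, - x4, - x5, - x6, - x7]"
  by (simp add: Let_def)

declare cd_mul.simps(2) [simp del] cd_conj.simps(2) [simp del]

lemma quaternion_carrierD: "x \<in> cd_carrier [g] \<Longrightarrow> \<exists>a b c d. x = [a,b,c,d]"
  and octonion_carrierD: "x \<in> cd_carrier [g2,g1] \<Longrightarrow> \<exists>a b c d e f g h. x = [a,b,c,d,e,f,g,h]"
  by (simp_all add: cd_carrier_def cd_dim_def numeral_eq_Suc length_Suc_conv) blast+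

lemma quaternion_in_carrier [simp]: "[a,b,c,d] \<in> cd_carrier [g]"
  and octonion_in_carrier [simp]: "[a,b,c,d,e,f,g,h] \<in> cd_carrier [g2,g1]"
  and cd_scal_quaternion: "cd_scal [g] a = [a,0,0,0]"
  and cd_scal_octonion: "cd_scal [g2,g1] a = [a,0,0,0,0,0,0,0]"
  by (simp_all add: cd_carrier_def cd_dim_def cd_scal_def numeral_eq_Suc)

lemma cd_params_cases:
  assumes "length gs = 1 \<or> length gs = 2"
  obtains g where "gs = [g]" | g2 g1 where "gs = [g2, g1]"
  using assms by (auto simp: numeral_eq_Suc length_Suc_conv)

lemmas cd_coord_simps = cd_mul_quaternion cd_conj_quaternion cd_mul_octonion cd_conj_octonion
  cd_scal_quaternion cd_scal_octonion vadd_def vsub_def vsmul_def cd_zero_def cd_tr_def cd_norm_def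

(* In coordinates of A_1 = F[l]: (a + b l) v = a + b l and (a + b l) conj(v) = a + b l, where
   v = conj(l) / l = (l - 1 - mu) / mu. Only 0 is fixed, as n(v - 1) = (4 mu + 1) / mu. *)
lemma a1_rot_fixed_imp_zero:
  fixes mu a b :: "'f::field"
  assumes mu: "mu \<noteq> 0" and disc: "4 * mu + 1 \<noteq> 0"
    and "b - a * (1 + mu) / mu = a" and "a / mu - b = b"
  shows "a = 0 \<and> b = 0"
proof -
  have a: "a = 2 * mu * b" using assms(4) mu by (simp add: field_simps)
  have "mu * b - a * (1 + mu) = mu * a" using assms(3) mu by (simp add: field_simps)
  then have "mu * b * (4 * mu + 1) = 0" using a by algebra
  then show ?thesis using mu disc a by simp
qed

lemma a1_rot_conj_fixed_imp_zero:
  fixes mu a b :: "'f::field"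
  assumes mu: "mu \<noteq> 0" and disc: "4 * mu + 1 \<noteq> 0"
    and "- a - b = a" and "- a / mu - b - b / mu = b"
  shows "a = 0 \<and> b = 0"
proof -
  have b: "b = - 2 * a" using assms(3) by (simp add: algebra_simps add_eq_0_iff2)
  have "- a - mu * b - b = mu * b"
  proof -
    have "mu * (- a / mu - b - b / mu) = mu * b" using assms(4) by simp
    then show ?thesis using mu by (simp add: algebra_simps)
  qed
  then have "a * (4 * mu + 1) = 0" using b by algebra
  then show ?thesis using disc b by simp
qed

(* For x = (a, b) with b \<noteq> 0 the witness is (a, b v), which keeps trace and norm as n(v) = 1;
   in the octonions b v = (c v, d conj(v)) for b = (c, d). For x in A_1 it is the conjugate of x. *)
lemma quaternion_sphere_other_point:
  fixes mu :: "'f::field"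
  assumes mu: "mu \<noteq> 0" and disc: "4 * mu + 1 \<noteq> 0" and x: "(x1, x2, x3) \<noteq> (0, 0, 0)"
  shows "\<exists>r\<in>cd_carrier [g]. r \<noteq> [x0,x1,x2,x3] \<and> cd_tr [g] r = cd_tr [g] [x0,x1,x2,x3]
           \<and> cd_norm mu [g] r = cd_norm mu [g] [x0,x1,x2,x3]"
proof (cases "x2 = 0 \<and> x3 = 0")
  case True
  then show ?thesis using x
    by (intro bexI[of _ "[x0 + x1, - x1, 0, 0]"]) (simp_all add: cd_coord_simps algebra_simps)
next
  case False
  let ?r = "[x0, x1, x3 - x2 * (1 + mu) / mu, x2 / mu - x3]"
  show ?thesis
  proof (intro bexI[of _ ?r] conjI)
    show "?r \<noteq> [x0,x1,x2,x3]"
      using a1_rot_fixed_imp_zero[OF mu disc, where a = x2 and b = x3] False by auto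
    show "cd_norm mu [g] ?r = cd_norm mu [g] [x0,x1,x2,x3]"
      using mu by (simp add: cd_coord_simps) (simp add: field_simps)
  qed (simp_all add: cd_coord_simps)
qed

lemma octonion_sphere_other_point:
  fixes mu :: "'f::field"
  assumes mu: "mu \<noteq> 0" and disc: "4 * mu + 1 \<noteq> 0"
    and x: "(x1, x2, x3, x4, x5, x6, x7) \<noteq> (0, 0, 0, 0, 0, 0, 0)"
  shows "\<exists>r\<in>cd_carrier [g2,g1]. r \<noteq> [x0,x1,x2,x3,x4,x5,x6,x7]
           \<and> cd_tr [g2,g1] r = cd_tr [g2,g1] [x0,x1,x2,x3,x4,x5,x6,x7]
           \<and> cd_norm mu [g2,g1] r = cd_norm mu [g2,g1] [x0,x1,x2,x3,x4,x5,x6,x7]"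
proof (cases "x4 = 0 \<and> x5 = 0 \<and> x6 = 0 \<and> x7 = 0")
  case True
  obtain r where "r \<in> cd_carrier [g1]" "r \<noteq> [x0,x1,x2,x3]" "cd_tr [g1] r = cd_tr [g1] [x0,x1,x2,x3]"
    "cd_norm mu [g1] r = cd_norm mu [g1] [x0,x1,x2,x3]"
    using quaternion_sphere_other_point[OF mu disc] True x by blast
  then show ?thesis using True
    by (intro bexI[of _ "r @ [0, 0, 0, 0]"]) (auto simp: cd_coord_simps dest!: quaternion_carrierD)
next
  case False
  let ?r = "[x0, x1, x2, x3,
    x5 - x4 * (1 + mu) / mu, x4 / mu - x5, - x6 - x7, - x6 / mu - x7 - x7 / mu]"
  show ?thesis
  proof (intro bexI[of _ ?r] conjI)
    show "?r \<noteq> [x0,x1,x2,x3,x4,x5,x6,x7]"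
      using a1_rot_fixed_imp_zero[OF mu disc, where a = x4 and b = x5]
        a1_rot_conj_fixed_imp_zero[OF mu disc, where a = x6 and b = x7] False
      by auto
    show "cd_norm mu [g2,g1] ?r = cd_norm mu [g2,g1] [x0,x1,x2,x3,x4,x5,x6,x7]"
      using mu by (simp add: cd_coord_simps) (simp add: field_simps)
  qed (simp_all add: cd_coord_simps)
qed

context
  fixes mu :: "'f::field" and gs :: "'f list"
  assumes quat_oct: "length gs = 1 \<or> length gs = 2"
begin

(* gs occurs only in the premises of these rules, which the simplifier can discharge once gs is
   fixed. *)
declare nth_vadd [where gs = gs, simp] nth_vsub [where gs = gs, simp]
  nth_vsmul [where gs = gs, simp]

lemma cd_conj_closed [simp]: "x \<in> cd_carrier gs \<Longrightarrow> cd_conj gs x \<in> cd_carrier gs"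
  using quat_oct by (cases rule: cd_params_cases)
    (auto simp: cd_coord_simps dest!: quaternion_carrierD octonion_carrierD)

lemma cd_mul_closed [simp]:
  "x \<in> cd_carrier gs \<Longrightarrow> y \<in> cd_carrier gs \<Longrightarrow> cd_mul mu gs x y \<in> cd_carrier gs"
  using quat_oct by (cases rule: cd_params_cases)
    (auto simp: cd_coord_simps dest!: quaternion_carrierD octonion_carrierD)

lemma cd_mul_vadd_left:
  "x \<in> cd_carrier gs \<Longrightarrow> y \<in> cd_carrier gs \<Longrightarrow> z \<in> cd_carrier gs \<Longrightarrow>
    cd_mul mu gs (vadd x y) z = vadd (cd_mul mu gs x z) (cd_mul mu gs y z)"
  using quat_oct by (cases rule: cd_params_cases)
    (auto simp: cd_coord_simps algebra_simps dest!: quaternion_carrierD octonion_carrierD)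

lemma cd_mul_vadd_right:
  "x \<in> cd_carrier gs \<Longrightarrow> y \<in> cd_carrier gs \<Longrightarrow> z \<in> cd_carrier gs \<Longrightarrow>
    cd_mul mu gs x (vadd y z) = vadd (cd_mul mu gs x y) (cd_mul mu gs x z)"
  using quat_oct by (cases rule: cd_params_cases)
    (auto simp: cd_coord_simps algebra_simps dest!: quaternion_carrierD octonion_carrierD)

lemma cd_mul_vsub_right:
  "x \<in> cd_carrier gs \<Longrightarrow> y \<in> cd_carrier gs \<Longrightarrow> z \<in> cd_carrier gs \<Longrightarrow>
    cd_mul mu gs x (vsub y z) = vsub (cd_mul mu gs x y) (cd_mul mu gs x z)"
  using quat_oct by (cases rule: cd_params_cases)
    (auto simp: cd_coord_simps algebra_simps dest!: quaternion_carrierD octonion_carrierD)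

lemma cd_mul_vsmul_left:
  "x \<in> cd_carrier gs \<Longrightarrow> y \<in> cd_carrier gs \<Longrightarrow> cd_mul mu gs (vsmul c x) y = vsmul c (cd_mul mu gs x y)"
  using quat_oct by (cases rule: cd_params_cases)
    (auto simp: cd_coord_simps algebra_simps dest!: quaternion_carrierD octonion_carrierD)

lemma cd_mul_vsmul_right:
  "x \<in> cd_carrier gs \<Longrightarrow> y \<in> cd_carrier gs \<Longrightarrow> cd_mul mu gs x (vsmul c y) = vsmul c (cd_mul mu gs x y)"
  using quat_oct by (cases rule: cd_params_cases)
    (auto simp: cd_coord_simps algebra_simps dest!: quaternion_carrierD octonion_carrierD)

lemma cd_mul_scal_left: "x \<in> cd_carrier gs \<Longrightarrow> cd_mul mu gs (cd_scal gs a) x = vsmul a x"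
  using quat_oct by (cases rule: cd_params_cases)
    (auto simp: cd_coord_simps algebra_simps dest!: quaternion_carrierD octonion_carrierD)

lemma cd_mul_scal_right: "x \<in> cd_carrier gs \<Longrightarrow> cd_mul mu gs x (cd_scal gs a) = vsmul a x"
  using quat_oct by (cases rule: cd_params_cases)
    (auto simp: cd_coord_simps algebra_simps dest!: quaternion_carrierD octonion_carrierD)

lemma cd_mul_zero_left: "x \<in> cd_carrier gs \<Longrightarrow> cd_mul mu gs (cd_zero gs) x = cd_zero gs"
  using quat_oct by (cases rule: cd_params_cases)
    (auto simp: cd_coord_simps algebra_simps dest!: quaternion_carrierD octonion_carrierD)

lemma cd_tr_eq_scal: "x \<in> cd_carrier gs \<Longrightarrow> cd_tr gs x = cd_scal gs (cd_tr gs x ! 0)"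
  using quat_oct by (cases rule: cd_params_cases)
    (auto simp: cd_coord_simps algebra_simps dest!: quaternion_carrierD octonion_carrierD)

lemma cd_norm_eq_scal: "x \<in> cd_carrier gs \<Longrightarrow> cd_norm mu gs x = cd_scal gs (cd_norm mu gs x ! 0)"
  using quat_oct by (cases rule: cd_params_cases)
    (auto simp: cd_coord_simps algebra_simps dest!: quaternion_carrierD octonion_carrierD)

lemma cd_norm_vadd_scal:
  "x \<in> cd_carrier gs \<Longrightarrow>
    cd_norm mu gs (vadd x (cd_scal gs c)) ! 0 = cd_norm mu gs x ! 0 + c * cd_tr gs x ! 0 + c * c"
  using quat_oct by (cases rule: cd_params_cases)
    (auto simp: cd_coord_simps algebra_simps dest!: quaternion_carrierD octonion_carrierD)

lemma cd_charpoly_eval_self: "x \<in> cd_carrier gs \<Longrightarrow> cd_charpoly_eval mu gs x x = cd_zero gs"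
  using quat_oct by (cases rule: cd_params_cases)
    (auto simp: cd_charpoly_eval_def numeral_2_eq_2 cd_coord_simps algebra_simps
      dest!: quaternion_carrierD octonion_carrierD)

lemma cd_mul_mul_conj_right:
  "x \<in> cd_carrier gs \<Longrightarrow> y \<in> cd_carrier gs \<Longrightarrow>
    cd_mul mu gs (cd_mul mu gs x y) (cd_conj gs y) = vsmul (cd_norm mu gs y ! 0) x"
  using quat_oct by (cases rule: cd_params_cases)
    (auto simp: cd_coord_simps algebra_simps dest!: quaternion_carrierD octonion_carrierD)

lemma cd_pow_2: "x \<in> cd_carrier gs \<Longrightarrow> cd_pow mu gs x 2 = cd_mul mu gs x x"
  by (simp add: numeral_2_eq_2 cd_mul_scal_right)

lemma cd_quad_equiv_iff:
  "x \<in> cd_carrier gs \<Longrightarrow> y \<in> cd_carrier gs \<Longrightarrow>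
    cd_quad_equiv mu gs x y \<longleftrightarrow>
      cd_tr gs x ! 0 = cd_tr gs y ! 0 \<and> cd_norm mu gs x ! 0 = cd_norm mu gs y ! 0"
  by (metis cd_quad_equiv_def cd_tr_eq_scal cd_norm_eq_scal)

lemma cd_sq_eq_if_charpoly_root:
  assumes lam: "lam \<in> cd_carrier gs" and r: "r \<in> cd_carrier gs"
    and root: "cd_charpoly_eval mu gs lam r = cd_zero gs"
  shows "cd_mul mu gs r r = vsub (vsmul (cd_tr gs lam ! 0) r) (cd_scal gs (cd_norm mu gs lam ! 0))"
proof (rule cd_carrier_eqI)
  fix j assume j: "j < cd_dim gs"
  define t m where "t = cd_tr gs lam ! 0" and "m = cd_norm mu gs lam ! 0"
  have "cd_charpoly_eval mu gs lam r = vadd (vsub (cd_mul mu gs r r) (vsmul t r)) (cd_scal gs m)"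
    unfolding cd_charpoly_eval_def t_def m_def
    using cd_tr_eq_scal[OF lam] cd_norm_eq_scal[OF lam] by (metis cd_pow_2 r cd_mul_scal_left)
  then have "cd_mul mu gs r r ! j - t * r ! j + (if j = 0 then m else 0) = 0"
    using arg_cong[where f = "\<lambda>v. v ! j", OF root] r j by simp
  then show "cd_mul mu gs r r ! j = vsub (vsmul t r) (cd_scal gs m) ! j"
    using r j by (simp add: algebra_simps eq_neg_iff_add_eq_0)
qed (simp_all add: lam r)

lemma cd_pow_eq_pow_rem:
  assumes r: "r \<in> cd_carrier gs" and sq: "cd_mul mu gs r r = vsub (vsmul t r) (cd_scal gs m)"
  shows "cd_pow mu gs r k = vadd (cd_scal gs (fst (pow_rem t m k))) (vsmul (snd (pow_rem t m k)) r)"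
proof (induction k)
  case 0
  show ?case using r by (intro cd_carrier_eqI[where gs = gs]) auto
next
  case (Suc k)
  then show ?case using r
    by (intro cd_carrier_eqI[where gs = gs])
      (auto simp: cd_mul_vadd_right cd_mul_scal_right cd_mul_vsmul_right sq algebra_simps)
qed

lemma cd_eval_eq_lincomb:
  assumes fs: "\<forall>a\<in>set fs. a \<in> cd_carrier gs" and r: "r \<in> cd_carrier gs"
    and sq: "cd_mul mu gs r r = vsub (vsmul t r) (cd_scal gs m)"
  shows "cd_eval mu gs fs r = vadd (cd_lincomb gs (\<lambda>k. fst (pow_rem t m k)) fs)
    (cd_mul mu gs (cd_lincomb gs (\<lambda>k. snd (pow_rem t m k)) fs) r)"
proof -
  have "foldr vadd (map (\<lambda>k. cd_mul mu gs (fs ! k) (cd_pow mu gs r k)) ks) (cd_zero gs) =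
    vadd (vsum gs (map (\<lambda>k. vsmul (fst (pow_rem t m k)) (fs ! k)) ks))
      (cd_mul mu gs (vsum gs (map (\<lambda>k. vsmul (snd (pow_rem t m k)) (fs ! k)) ks)) r)"
    if "\<forall>k\<in>set ks. fs ! k \<in> cd_carrier gs" for ks
    using that
  proof (induction ks)
    case Nil
    show ?case using r by (intro cd_carrier_eqI[where gs = gs]) (simp_all add: cd_mul_zero_left)
  next
    case (Cons k ks)
    then show ?case using r
      by (intro cd_carrier_eqI[where gs = gs])
        (auto simp: cd_pow_eq_pow_rem[OF r sq] cd_mul_vadd_left cd_mul_vadd_right cd_mul_vsmul_left
          cd_mul_vsmul_right cd_mul_scal_right algebra_simps)
  qed
  then show ?thesis using fs by (simp add: cd_eval_def cd_lincomb_def)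
qed

lemma cd_pcoeff_eq_mul_scal:
  assumes fs: "\<forall>a\<in>set fs. a \<in> cd_carrier gs" and c: "c \<in> cd_carrier gs"
    and deg: "degree g < length fs"
    and coord: "\<And>j. j < cd_dim gs \<Longrightarrow> cd_coord_poly fs j = smult (c ! j) g"
  shows "cd_pcoeff gs fs k = cd_mul mu gs c (cd_scal gs (coeff g k))"
proof (rule cd_carrier_eqI)
  fix j assume j: "j < cd_dim gs"
  have "cd_pcoeff gs fs k ! j = coeff (cd_coord_poly fs j) k"
    using deg j by (auto simp: cd_pcoeff_def coeff_cd_coord_poly coeff_eq_0)
  then show "cd_pcoeff gs fs k ! j = cd_mul mu gs c (cd_scal gs (coeff g k)) ! j"
    using c j by (simp add: coord cd_mul_scal_right)
qed (use fs c in \<open>auto simp: cd_pcoeff_def\<close>)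

context
  assumes params: "cd_params_ok mu gs" and division: "cd_division mu gs"
begin

lemma cd_division_mu_nonzero: "mu \<noteq> 0"
proof
  assume "mu = 0"
  have "\<exists>x\<in>cd_carrier gs. x \<noteq> cd_zero gs \<and> cd_norm mu gs x = cd_zero gs"
    using quat_oct
  proof (cases rule: cd_params_cases)
    case 1
    then show ?thesis using \<open>mu = 0\<close>
      by (intro bexI[of _ "[0, 1, 0, 0]"]) (simp_all add: cd_coord_simps)
  next
    case 2
    then show ?thesis using \<open>mu = 0\<close>
      by (intro bexI[of _ "[0, 1, 0, 0, 0, 0, 0, 0]"]) (simp_all add: cd_coord_simps)
  qed
  then show False using division by (auto simp: cd_division_def)
qed

lemma cd_norm_zero_imp_zero:
  assumes x: "x \<in> cd_carrier gs" and "cd_norm mu gs x ! 0 = 0"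
  shows "x = cd_zero gs"
proof -
  have "cd_norm mu gs x = cd_zero gs" using assms(2) by (metis cd_norm_eq_scal[OF x] cd_zero_def)
  then show ?thesis using division x by (simp add: cd_division_def)
qed

lemma cd_mul_eq_zero_imp:
  assumes x: "x \<in> cd_carrier gs" and y: "y \<in> cd_carrier gs"
    and xy: "cd_mul mu gs x y = cd_zero gs" and "y \<noteq> cd_zero gs"
  shows "x = cd_zero gs"
proof (rule cd_carrier_eqI)
  fix j assume j: "j < cd_dim gs"
  have "vsmul (cd_norm mu gs y ! 0) x = cd_zero gs"
    using cd_mul_mul_conj_right[OF x y] xy cd_mul_zero_left[of "cd_conj gs y"] y by simp
  then have "cd_norm mu gs y ! 0 * x ! j = 0" using x j by (metis nth_cd_zero nth_vsmul)
  then show "x ! j = cd_zero gs ! j" using cd_norm_zero_imp_zero[OF y] \<open>y \<noteq> cd_zero gs\<close> j by auto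
qed (simp_all add: x)

lemma cd_sphere_other_point:
  assumes x: "x \<in> cd_carrier gs" and "\<not> cd_in_F gs x"
  shows "\<exists>r\<in>cd_carrier gs. r \<noteq> x \<and> cd_tr gs r = cd_tr gs x \<and> cd_norm mu gs r = cd_norm mu gs x"
proof -
  have mu: "mu \<noteq> 0" by (rule cd_division_mu_nonzero)
  have disc: "4 * mu + 1 \<noteq> 0" using params by (simp add: cd_params_ok_def)
  from quat_oct show ?thesis
  proof (cases rule: cd_params_cases)
    case (1 g)
    from quaternion_carrierD[OF x[unfolded 1]]
    obtain x0 x1 x2 x3 where x_eq: "x = [x0, x1, x2, x3]" by blast
    have "(x1, x2, x3) \<noteq> (0, 0, 0)"
      using assms(2) by (auto simp: 1 x_eq cd_in_F_def cd_scal_quaternion)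
    then show ?thesis unfolding 1 x_eq by (rule quaternion_sphere_other_point[OF mu disc])
  next
    case (2 g2 g1)
    from octonion_carrierD[OF x[unfolded 2]]
    obtain x0 x1 x2 x3 x4 x5 x6 x7 where x_eq: "x = [x0, x1, x2, x3, x4, x5, x6, x7]" by blast
    have "(x1, x2, x3, x4, x5, x6, x7) \<noteq> (0, 0, 0, 0, 0, 0, 0)"
      using assms(2) by (auto simp: 2 x_eq cd_in_F_def cd_scal_octonion)
    then show ?thesis unfolding 2 x_eq by (rule octonion_sphere_other_point[OF mu disc])
  qed
qed

lemma spherical_root_lincombs_vanish:
  assumes fs: "\<forall>a\<in>set fs. a \<in> cd_carrier gs" and sph: "cd_spherical_root mu gs fs lam"
  defines "t \<equiv> cd_tr gs lam ! 0" and "m \<equiv> cd_norm mu gs lam ! 0"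
  shows "cd_lincomb gs (\<lambda>k. fst (pow_rem t m k)) fs = cd_zero gs"
    and "cd_lincomb gs (\<lambda>k. snd (pow_rem t m k)) fs = cd_zero gs"
proof -
  define A where "A = cd_lincomb gs (\<lambda>k. fst (pow_rem t m k)) fs"
  define B where "B = cd_lincomb gs (\<lambda>k. snd (pow_rem t m k)) fs"
  have A: "A \<in> cd_carrier gs" and B: "B \<in> cd_carrier gs" using fs by (simp_all add: A_def B_def)
  have lam: "lam \<in> cd_carrier gs" and "\<not> cd_in_F gs lam"
    and eval_lam: "cd_eval mu gs fs lam = cd_zero gs"
    and sphere: "\<And>r. r \<in> cd_carrier gs \<Longrightarrow> cd_charpoly_eval mu gs lam r = cd_zero gs \<Longrightarrow>
      cd_eval mu gs fs r = cd_zero gs"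
    using sph by (auto simp: cd_spherical_root_def)
  from cd_sphere_other_point[OF lam \<open>\<not> cd_in_F gs lam\<close>]
  obtain r where r: "r \<in> cd_carrier gs" "r \<noteq> lam" "cd_tr gs r = cd_tr gs lam"
    "cd_norm mu gs r = cd_norm mu gs lam" by blast
  have root_r: "cd_charpoly_eval mu gs lam r = cd_zero gs"
    using cd_charpoly_eval_self[OF r(1)] r(3,4) by (simp add: cd_charpoly_eval_def)
  have eval_eq: "vadd A (cd_mul mu gs B s) = cd_eval mu gs fs s"
    if "s \<in> cd_carrier gs" and "cd_charpoly_eval mu gs lam s = cd_zero gs" for s
    using cd_eval_eq_lincomb[OF fs that(1) cd_sq_eq_if_charpoly_root[OF lam that]]
    unfolding A_def B_def t_def m_def by simp
  have at_lam: "vadd A (cd_mul mu gs B lam) = cd_zero gs"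
    using eval_eq[OF lam cd_charpoly_eval_self[OF lam]] eval_lam by simp
  have at_r: "vadd A (cd_mul mu gs B r) = cd_zero gs"
    using eval_eq[OF r(1) root_r] sphere[OF r(1) root_r] by simp
  have "cd_mul mu gs B lam = cd_mul mu gs B r"
  proof (rule cd_carrier_eqI[where gs = gs])
    fix j assume "j < cd_dim gs"
    then show "cd_mul mu gs B lam ! j = cd_mul mu gs B r ! j"
      using arg_cong[where f = "\<lambda>v. v ! j", OF at_lam] arg_cong[where f = "\<lambda>v. v ! j", OF at_r]
        A B lam r(1)
      by (simp add: add_eq_0_iff2)
  qed (simp_all add: B lam r(1))
  then have "cd_mul mu gs B (vsub lam r) = cd_zero gs"
    using B lam r(1) by (simp add: cd_mul_vsub_right vsub_eq_zero_iff)
  moreover have "vsub lam r \<noteq> cd_zero gs" using lam r(1,2) by (simp add: vsub_eq_zero_iff)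
  ultimately have "B = cd_zero gs" by (rule cd_mul_eq_zero_imp[OF B vsub_closed[OF lam r(1)]])
  then show "cd_lincomb gs (\<lambda>k. snd (pow_rem t m k)) fs = cd_zero gs" by (simp add: B_def)
  show "cd_lincomb gs (\<lambda>k. fst (pow_rem t m k)) fs = cd_zero gs"
  proof (rule cd_carrier_eqI[where gs = gs])
    fix j assume "j < cd_dim gs"
    then show "cd_lincomb gs (\<lambda>k. fst (pow_rem t m k)) fs ! j = cd_zero gs ! j"
      using arg_cong[where f = "\<lambda>v. v ! j", OF at_lam] \<open>B = cd_zero gs\<close> A lam
      by (simp add: A_def cd_mul_zero_left)
  qed (simp_all add: fs)
qed

lemma spherical_root_quad_poly_dvd:
  assumes fs: "\<forall>a\<in>set fs. a \<in> cd_carrier gs" and sph: "cd_spherical_root mu gs fs lam"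
    and j: "j < cd_dim gs"
  shows "quad_poly (cd_tr gs lam ! 0) (cd_norm mu gs lam ! 0) dvd cd_coord_poly fs j"
  unfolding cd_coord_poly_def
proof (rule quad_poly_dvd_sum_monom)
  let ?t = "cd_tr gs lam ! 0" and ?m = "cd_norm mu gs lam ! 0"
  show "(\<Sum>k<length fs. fst (pow_rem ?t ?m k) * fs ! k ! j) = 0"
    using spherical_root_lincombs_vanish(1)[OF fs sph]
      nth_cd_lincomb[OF fs j, of "\<lambda>k. fst (pow_rem ?t ?m k)"] j
    by simp
  show "(\<Sum>k<length fs. snd (pow_rem ?t ?m k) * fs ! k ! j) = 0"
    using spherical_root_lincombs_vanish(2)[OF fs sph]
      nth_cd_lincomb[OF fs j, of "\<lambda>k. snd (pow_rem ?t ?m k)"] j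
    by simp
qed

lemma poly_quad_poly_nonzero:
  assumes lam: "lam \<in> cd_carrier gs" and "\<not> cd_in_F gs lam"
  shows "poly (quad_poly (cd_tr gs lam ! 0) (cd_norm mu gs lam ! 0)) a \<noteq> 0"
proof
  assume "poly (quad_poly (cd_tr gs lam ! 0) (cd_norm mu gs lam ! 0)) a = 0"
  then have "cd_norm mu gs (vadd lam (cd_scal gs (- a))) ! 0 = 0"
    using lam by (simp add: cd_norm_vadd_scal poly_quad_poly algebra_simps)
  then have shifted: "vadd lam (cd_scal gs (- a)) = cd_zero gs"
    using lam by (simp add: cd_norm_zero_imp_zero)
  have "lam = cd_scal gs a"
  proof (rule cd_carrier_eqI[where gs = gs])
    fix j assume j: "j < cd_dim gs"
    have "lam ! j + cd_scal gs (- a) ! j = 0"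
      using arg_cong[where f = "\<lambda>v. v ! j", OF shifted] lam j
      by (simp only: nth_vadd cd_scal_closed nth_cd_zero)
    then show "lam ! j = cd_scal gs a ! j"
      using j by (cases "j = 0") (simp_all add: eq_neg_iff_add_eq_0)
  qed (simp_all add: lam)
  then show False using assms(2) by (auto simp: cd_in_F_def)
qed

end

end

theorem corollary3p20:
  fixes mu :: "'f::field" and gs :: "'f list" and fs :: "'f list list"
    and n :: nat and lams :: "nat \<Rightarrow> 'f list"
  assumes "length gs = 1 \<or> length gs = 2"
    and "cd_params_ok mu gs"
    and "cd_division mu gs"
    and "\<forall>a\<in>set fs. a \<in> cd_carrier gs"
    and "length fs = 2 * n + 1"
    and "last fs \<noteq> cd_zero gs"
    and "\<forall>i<n. cd_spherical_root mu gs fs (lams i)"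
    and "\<forall>i<n. \<forall>j<n. i \<noteq> j \<longrightarrow> \<not> cd_quad_equiv mu gs (lams i) (lams j)"
  shows "\<exists>c\<in>cd_carrier gs. \<exists>g :: 'f poly.
           \<forall>k. cd_pcoeff gs fs k = cd_mul mu gs c (cd_scal gs (coeff g k))"
proof -
  note quat_oct = assms(1) and alg = assms(1-3) and fs = assms(4) and len = assms(5)
  let ?p = "\<lambda>i. quad_poly (cd_tr gs (lams i) ! 0) (cd_norm mu gs (lams i) ! 0)"
  define g where "g = (\<Prod>i<n. ?p i)"
  have lam: "lams i \<in> cd_carrier gs" "\<not> cd_in_F gs (lams i)" if "i < n" for i
    using assms(7) that by (auto simp: cd_spherical_root_def)
  have "inj_on ?p {..<n}"
    using assms(8) lam(1) by (auto simp: inj_on_def cd_quad_equiv_iff[OF quat_oct])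
  then have dvd: "g dvd cd_coord_poly fs j" if "j < cd_dim gs" for j
    unfolding g_def using assms(7) that lam
    by (intro prod_dvd_if_distinct_monic_irreducible irreducible_quad_poly
        poly_quad_poly_nonzero[OF alg] spherical_root_quad_poly_dvd[OF alg fs]) auto
  have deg: "degree g = 2 * n" unfolding g_def by (simp add: degree_prod_sum_eq)
  have monic: "lead_coeff g = 1" unfolding g_def by (rule trans[OF lead_coeff_prod]) simp
  have coord: "cd_coord_poly fs j = smult (fs ! (2 * n) ! j) g" if "j < cd_dim gs" for j
  proof -
    have "degree (cd_coord_poly fs j) \<le> degree g"
      using degree_cd_coord_poly_le[of fs j] deg len by simp
    from dvd_imp_eq_smult_if_degree_le[OF dvd[OF that] this monic]
    show ?thesis by (simp add: deg coeff_cd_coord_poly len)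
  qed
  have c: "fs ! (2 * n) \<in> cd_carrier gs" using fs len by simp
  have "cd_pcoeff gs fs k = cd_mul mu gs (fs ! (2 * n)) (cd_scal gs (coeff g k))" for k
    using coord by (intro cd_pcoeff_eq_mul_scal[OF quat_oct fs c]) (simp_all add: deg len)
  then show ?thesis using c by blast
qed

end
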